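(* Let $G$ be a group acting on a set $X$. Let $A\subset G$ and $Y\subset X$ be nonempty with $Y$ finite, and suppose there exists $\alpha\in\,]0,1[$ such that $\mathrm{Sym}_{\alpha}(Y)\subset AA^{-1}$ and $|A^{-1}\cdot Y|\leq\frac{3-\alpha}{2}|Y|$. Then $AA^{-1}$ is a subgroup of $G$.
   Context: $AA^{-1}=\{ab^{-1}\mid a,b\in A\}$, $A^{-1}\cdot Y=\{a^{-1}\cdot y\mid a\in A,y\in Y\}$, and $\mathrm{Sym}_{\alpha}(Y)=\{g\in G\mid |g\cdot Y\cap Y|\geq\alpha|Y|\}$. *)

theory Defs
  imports "HOL-Algebra.Group_Action" Complex_Main
begin

definition diff_set :: "('a, 'm) monoid_scheme \<Rightarrow> 'a set \<Rightarrow> 'a set" where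
  "diff_set G A = {a \<otimes>\<^bsub>G\<^esub> inv\<^bsub>G\<^esub> b | a b. a \<in> A \<and> b \<in> A}"

definition inv_act_set :: "('a, 'm) monoid_scheme \<Rightarrow> ('a \<Rightarrow> 'b \<Rightarrow> 'b) \<Rightarrow> 'a set \<Rightarrow> 'b set \<Rightarrow> 'b set" where
  "inv_act_set G \<phi> A Y = {\<phi> (inv\<^bsub>G\<^esub> a) y | a y. a \<in> A \<and> y \<in> Y}"

definition Sym_alpha :: "('a, 'm) monoid_scheme \<Rightarrow> ('a \<Rightarrow> 'b \<Rightarrow> 'b) \<Rightarrow> real \<Rightarrow> 'b set \<Rightarrow> 'a set" where
  "Sym_alpha G \<phi> \<alpha> Y = {g \<in> carrier G. real (card ((\<phi> g) ` Y \<inter> Y)) \<ge> \<alpha> * real (card Y)}"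

end

theory Submission
  imports Defs
begin

text \<open>For \<open>a, b \<in> A\<close> the translates \<open>a\<inverse>Y\<close> and \<open>b\<inverse>Y\<close> both lie in \<open>A\<inverse>Y\<close>, so they share
  at least \<open>2|Y| - |A\<inverse>Y| \<ge> (1 + \<alpha>)/2 |Y|\<close> points; translating by \<open>a\<close> shows that
  \<open>ab\<inverse>\<close> lies in \<open>Sym_\<beta>(Y)\<close> with \<open>\<beta> = (1 + \<alpha>)/2\<close>. Inclusion-exclusion inside \<open>gY\<close> gives
  \<open>Sym_\<beta>(Y) Sym_\<gamma>(Y) \<subseteq> Sym_(\<beta>+\<gamma>-1)(Y)\<close>, hence \<open>AA\<inverse>AA\<inverse> \<subseteq> Sym_\<alpha>(Y) \<subseteq> AA\<inverse>\<close>.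
  A set closed under products that is symmetric and contains \<open>1\<close> is a subgroup.\<close>

lemma (in group) diff_set_subgroupI:
  assumes A: "A \<subseteq> carrier G" "A \<noteq> {}"
    and mult_closed: "\<And>g h. g \<in> diff_set G A \<Longrightarrow> h \<in> diff_set G A \<Longrightarrow> g \<otimes> h \<in> diff_set G A"
  shows "subgroup (diff_set G A) G"
proof
  show "diff_set G A \<subseteq> carrier G"
    unfolding diff_set_def using A(1) by blast
next
  obtain a where a: "a \<in> A" using A(2) by blast
  then have "a \<otimes> inv a = \<one>" using A(1) by auto
  then show "\<one> \<in> diff_set G A" unfolding diff_set_def using a by force
next
  fix x assume "x \<in> diff_set G A"
  then obtain a b where ab: "a \<in> A" "b \<in> A" "x = a \<otimes> inv b"
    unfolding diff_set_def by blast
  then have "inv x = b \<otimes> inv a" using A(1) by (auto simp: inv_mult_group subset_iff)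
  then show "inv x \<in> diff_set G A" unfolding diff_set_def using ab by blast
qed (fact mult_closed)

context group_action
begin

lemma group: "group G"
  using group_hom group_hom.axioms(1) by blast

lemma act_image_subset: "g \<in> carrier G \<Longrightarrow> Y \<subseteq> E \<Longrightarrow> \<phi> g ` Y \<subseteq> E"
  using surj_prop by blast

lemma card_act_image: "g \<in> carrier G \<Longrightarrow> Y \<subseteq> E \<Longrightarrow> card (\<phi> g ` Y) = card Y"
  by (meson card_image inj_on_subset inj_prop)

lemma act_image_Int:
  "g \<in> carrier G \<Longrightarrow> B \<subseteq> E \<Longrightarrow> C \<subseteq> E \<Longrightarrow> \<phi> g ` (B \<inter> C) = \<phi> g ` B \<inter> \<phi> g ` C"
  by (rule inj_on_image_Int[OF inj_prop]) auto

lemma act_image_mult: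
  "g \<in> carrier G \<Longrightarrow> h \<in> carrier G \<Longrightarrow> Y \<subseteq> E \<Longrightarrow> \<phi> (g \<otimes> h) ` Y = \<phi> g ` \<phi> h ` Y"
  using composition_rule by (auto simp: image_iff) (metis subsetD)+

lemma act_image_one: "Y \<subseteq> E \<Longrightarrow> \<phi> \<one> ` Y = Y"
  using id_eq_one[symmetric] by (auto simp: image_iff)

lemma card_act_mult_Int_ge:
  assumes g: "g \<in> carrier G" and h: "h \<in> carrier G" and Y: "Y \<subseteq> E" "finite Y"
  shows "card (\<phi> h ` Y \<inter> Y) + card (\<phi> g ` Y \<inter> Y) \<le> card (\<phi> (g \<otimes> h) ` Y \<inter> Y) + card Y"
proof -
  define U where "U = \<phi> (g \<otimes> h) ` Y \<inter> \<phi> g ` Y"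
  define V where "V = \<phi> g ` Y \<inter> Y"
  have hY: "\<phi> h ` Y \<subseteq> E" using act_image_subset h Y by blast
  have "U = \<phi> g ` (\<phi> h ` Y \<inter> Y)"
    unfolding U_def using act_image_mult[OF g h Y(1)] act_image_Int[OF g hY Y(1)] by simp
  then have card_U: "card U = card (\<phi> h ` Y \<inter> Y)"
    using card_act_image[OF g, of "\<phi> h ` Y \<inter> Y"] hY by auto
  have fin: "finite (\<phi> g ` Y)" using Y by simp
  have "card (U \<union> V) \<le> card Y"
    using card_mono[OF fin, of "U \<union> V"] card_act_image[OF g Y(1)] by (auto simp: U_def V_def)
  moreover have "card U + card V = card (U \<union> V) + card (U \<inter> V)"
    by (rule card_Un_Int) (use fin U_def V_def in auto)
  moreover have "card (U \<inter> V) \<le> card (\<phi> (g \<otimes> h) ` Y \<inter> Y)"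
    by (rule card_mono) (use Y U_def V_def in auto)
  ultimately show ?thesis using card_U unfolding V_def by linarith
qed

lemma Sym_alpha_mult:
  assumes Y: "Y \<subseteq> E" "finite Y"
    and g: "g \<in> Sym_alpha G \<phi> \<beta> Y" and h: "h \<in> Sym_alpha G \<phi> \<gamma> Y"
  shows "g \<otimes> h \<in> Sym_alpha G \<phi> (\<beta> + \<gamma> - 1) Y"
proof -
  interpret group G by (rule group)
  have G: "g \<in> carrier G" "h \<in> carrier G" using g h by (auto simp: Sym_alpha_def)
  have "real (card (\<phi> h ` Y \<inter> Y)) + real (card (\<phi> g ` Y \<inter> Y))
      \<le> real (card (\<phi> (g \<otimes> h) ` Y \<inter> Y)) + real (card Y)"
    using card_act_mult_Int_ge[OF G Y] by linarith
  moreover have "\<beta> * real (card Y) \<le> real (card (\<phi> g ` Y \<inter> Y))"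
    "\<gamma> * real (card Y) \<le> real (card (\<phi> h ` Y \<inter> Y))"
    using g h by (auto simp: Sym_alpha_def)
  moreover have "(\<beta> + \<gamma> - 1) * real (card Y)
      = \<beta> * real (card Y) + \<gamma> * real (card Y) - real (card Y)"
    by (simp add: algebra_simps)
  ultimately have "(\<beta> + \<gamma> - 1) * real (card Y) \<le> real (card (\<phi> (g \<otimes> h) ` Y \<inter> Y))"
    by linarith
  then show ?thesis
    unfolding Sym_alpha_def using G by simp
qed

lemma card_act_mult_inv_Int:
  assumes a: "a \<in> carrier G" and b: "b \<in> carrier G" and Y: "Y \<subseteq> E"
  shows "card (\<phi> (a \<otimes> inv b) ` Y \<inter> Y) = card (\<phi> (inv b) ` Y \<inter> \<phi> (inv a) ` Y)"
proof -
  interpret group G by (rule group)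
  have inv_Y: "\<phi> (inv b) ` Y \<subseteq> E" "\<phi> (inv a) ` Y \<subseteq> E"
    using act_image_subset[OF inv_closed Y] a b by simp_all
  have "\<phi> a ` (\<phi> (inv b) ` Y \<inter> \<phi> (inv a) ` Y) = \<phi> a ` \<phi> (inv b) ` Y \<inter> \<phi> a ` \<phi> (inv a) ` Y"
    by (rule act_image_Int[OF a inv_Y])
  also have "\<phi> a ` \<phi> (inv b) ` Y = \<phi> (a \<otimes> inv b) ` Y"
    by (rule act_image_mult[OF a inv_closed[OF b] Y, symmetric])
  also have "\<phi> a ` \<phi> (inv a) ` Y = Y"
    using act_image_mult[OF a inv_closed[OF a] Y] act_image_one[OF Y] a by simp
  finally have "\<phi> a ` (\<phi> (inv b) ` Y \<inter> \<phi> (inv a) ` Y) = \<phi> (a \<otimes> inv b) ` Y \<inter> Y" .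
  moreover have "\<phi> (inv b) ` Y \<inter> \<phi> (inv a) ` Y \<subseteq> E"
    using inv_Y by blast
  ultimately show ?thesis
    using card_act_image[OF a] by metis
qed

lemma diff_set_subset_Sym_alpha:
  assumes A: "A \<subseteq> carrier G" and Y: "Y \<subseteq> E" "finite Y"
    and fin: "finite (inv_act_set G \<phi> A Y)"
    and card_le: "real (card (inv_act_set G \<phi> A Y)) \<le> (2 - \<beta>) * real (card Y)"
  shows "diff_set G A \<subseteq> Sym_alpha G \<phi> \<beta> Y"
proof
  interpret group G by (rule group)
  fix g assume "g \<in> diff_set G A"
  then obtain a b where ab: "a \<in> A" "b \<in> A" and g_def: "g = a \<otimes> inv b"
    unfolding diff_set_def by blast
  have G: "a \<in> carrier G" "b \<in> carrier G" using ab A by auto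
  define P where "P = \<phi> (inv b) ` Y"
  define Q where "Q = \<phi> (inv a) ` Y"
  have "P \<union> Q \<subseteq> inv_act_set G \<phi> A Y"
    unfolding P_def Q_def inv_act_set_def using ab by blast
  then have "card (P \<union> Q) \<le> card (inv_act_set G \<phi> A Y)"
    by (rule card_mono[OF fin])
  moreover have "card P + card Q = card (P \<union> Q) + card (P \<inter> Q)"
    by (rule card_Un_Int) (use Y P_def Q_def in auto)
  moreover have "card P = card Y" "card Q = card Y"
    unfolding P_def Q_def using card_act_image G Y by simp_all
  moreover have "card (\<phi> g ` Y \<inter> Y) = card (P \<inter> Q)"
    unfolding g_def P_def Q_def by (rule card_act_mult_inv_Int[OF G Y(1)])
  ultimately have "card Y + card Y \<le> card (inv_act_set G \<phi> A Y) + card (\<phi> g ` Y \<inter> Y)"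
    by linarith
  then have "real (card Y) + real (card Y)
      \<le> real (card (inv_act_set G \<phi> A Y)) + real (card (\<phi> g ` Y \<inter> Y))"
    by (metis of_nat_add of_nat_le_iff)
  moreover have "(2 - \<beta>) * real (card Y) = real (card Y) + real (card Y) - \<beta> * real (card Y)"
    by (simp add: algebra_simps)
  ultimately have "\<beta> * real (card Y) \<le> real (card (\<phi> g ` Y \<inter> Y))"
    using card_le by linarith
  then show "g \<in> Sym_alpha G \<phi> \<beta> Y"
    unfolding Sym_alpha_def g_def using G by auto
qed

end

theorem mainTheorem3:
  fixes G (structure) and X :: "'b set" and \<phi> :: "'a \<Rightarrow> 'b \<Rightarrow> 'b"
    and A :: "'a set" and Y :: "'b set" and \<alpha> :: real
  assumes "group_action G X \<phi>"
    and "A \<subseteq> carrier G" and "A \<noteq> {}"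
    and "Y \<subseteq> X" and "Y \<noteq> {}" and "finite Y"
    and "0 < \<alpha>" and "\<alpha> < 1"
    and "Sym_alpha G \<phi> \<alpha> Y \<subseteq> diff_set G A"
    and "finite (inv_act_set G \<phi> A Y)"
    and "real (card (inv_act_set G \<phi> A Y)) \<le> (3 - \<alpha>) / 2 * real (card Y)"
  shows "subgroup (diff_set G A) G"
proof -
  interpret group_action G X \<phi> by fact
  interpret group G by (rule group)
  have "(3 - \<alpha>) / 2 = 2 - (1 + \<alpha>) / 2" by (simp add: field_simps)
  with assms(11) have "real (card (inv_act_set G \<phi> A Y)) \<le> (2 - (1 + \<alpha>) / 2) * real (card Y)"
    by metis
  then have Sym_half: "diff_set G A \<subseteq> Sym_alpha G \<phi> ((1 + \<alpha>) / 2) Y"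
    by (rule diff_set_subset_Sym_alpha[OF assms(2,4,6,10)])
  show ?thesis
  proof (rule diff_set_subgroupI[OF assms(2,3)])
    fix g h assume "g \<in> diff_set G A" "h \<in> diff_set G A"
    then have "g \<otimes> h \<in> Sym_alpha G \<phi> ((1 + \<alpha>) / 2 + (1 + \<alpha>) / 2 - 1) Y"
      using Sym_alpha_mult[OF assms(4,6)] Sym_half by blast
    also have "(1 + \<alpha>) / 2 + (1 + \<alpha>) / 2 - 1 = \<alpha>" by simp
    finally show "g \<otimes> h \<in> diff_set G A" using assms(9) by blast
  qed
qed

end
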